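(* Let $C$ be a small category. If $f:X\to Y$ is an isomorphism in $Sd(C)$, then $X=Y$ and $f=\mathrm{id}_X$.
   Context: For $q\ge0$, $[q]=\{0<\dots<q\}$ viewed as a category. A $q$-simplex of the nerve $NC$ is a functor $X:[q]\to C$; $q_X=q$. It is non-degenerate if none of its arrows $X_{i-1}\to X_i$ is an identity. $\Delta/C$ has all simplices as objects and as morphisms $X\to Y$ the order-preserving $\xi:[q_X]\to[q_Y]$ with $Y\circ\xi=X$, written $\xi_*$. For a $q$-simplex $X$ and surjective order-preserving $s:[q+1]\to[q]$ with order-preserving right inverses $d,d'$, $d_*,d'_*:X\to X\circ s$ are elementary equivalent; $\sim$ is the smallest equivalence relation on morphisms of $\Delta/C$ compatible with composition containing these pairs; $[\Delta/C]$ is the quotient category (morphisms are classes $[\xi_*]$); $Sd(C)$ is the full subcategory of $[\Delta/C]$ on the non-degenerate simplices. *)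

theory Defs
  imports Main
begin

record ('o, 'a) category =
  Obj  :: "'o set"
  Arr  :: "'a set"
  Dom  :: "'a \<Rightarrow> 'o"
  Cod  :: "'a \<Rightarrow> 'o"
  Idt  :: "'o \<Rightarrow> 'a"
  Comp :: "'a \<Rightarrow> 'a \<Rightarrow> 'a"   (* Comp g f = g o f, defined when Cod f = Dom g *)

definition is_category :: "('o, 'a) category \<Rightarrow> bool" where
  "is_category C \<longleftrightarrow>
     (\<forall>f\<in>Arr C. Dom C f \<in> Obj C \<and> Cod C f \<in> Obj C) \<and>
     (\<forall>x\<in>Obj C. Idt C x \<in> Arr C \<and> Dom C (Idt C x) = x \<and> Cod C (Idt C x) = x) \<and>
     (\<forall>f\<in>Arr C. \<forall>g\<in>Arr C. Cod C f = Dom C g \<longrightarrow>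
         Comp C g f \<in> Arr C \<and> Dom C (Comp C g f) = Dom C f \<and> Cod C (Comp C g f) = Cod C g) \<and>
     (\<forall>f\<in>Arr C. Comp C (Idt C (Cod C f)) f = f \<and> Comp C f (Idt C (Dom C f)) = f) \<and>
     (\<forall>f\<in>Arr C. \<forall>g\<in>Arr C. \<forall>h\<in>Arr C. Cod C f = Dom C g \<longrightarrow> Cod C g = Dom C h \<longrightarrow>
         Comp C h (Comp C g f) = Comp C (Comp C h g) f)"

text \<open>A q-simplex is a functor from the poset category [q] = {0 < ... < q}:
  an object sob i for each i \<le> q and an arrow sar i j : sob i -> sob j for each i \<le> j \<le> q,
  functorially. Values outside the domain are fixed to undefined so that HOL equality
  is equality of functors.\<close>

record ('o, 'a) simplex =
  dim :: nat
  sob :: "nat \<Rightarrow> 'o"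
  sar :: "nat \<Rightarrow> nat \<Rightarrow> 'a"

definition is_simplex :: "('o, 'a) category \<Rightarrow> ('o, 'a) simplex \<Rightarrow> bool" where
  "is_simplex C X \<longleftrightarrow>
     (\<forall>i\<le>dim X. sob X i \<in> Obj C) \<and>
     (\<forall>i j. i \<le> j \<and> j \<le> dim X \<longrightarrow>
        sar X i j \<in> Arr C \<and> Dom C (sar X i j) = sob X i \<and> Cod C (sar X i j) = sob X j) \<and>
     (\<forall>i\<le>dim X. sar X i i = Idt C (sob X i)) \<and>
     (\<forall>i j k. i \<le> j \<and> j \<le> k \<and> k \<le> dim X \<longrightarrow> Comp C (sar X j k) (sar X i j) = sar X i k) \<and>
     (\<forall>i. dim X < i \<longrightarrow> sob X i = undefined) \<and>
     (\<forall>i j. \<not> (i \<le> j \<and> j \<le> dim X) \<longrightarrow> sar X i j = undefined)"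

definition nondeg :: "('o, 'a) category \<Rightarrow> ('o, 'a) simplex \<Rightarrow> bool" where
  "nondeg C X \<longleftrightarrow> is_simplex C X \<and>
     (\<forall>i. 1 \<le> i \<and> i \<le> dim X \<longrightarrow> \<not> (\<exists>x\<in>Obj C. sar X (i - 1) i = Idt C x))"

definition mono_map :: "nat \<Rightarrow> nat \<Rightarrow> (nat \<Rightarrow> nat) \<Rightarrow> bool" where
  "mono_map p q \<xi> \<longleftrightarrow> (\<forall>i\<le>p. \<xi> i \<le> q) \<and> (\<forall>i j. i \<le> j \<and> j \<le> p \<longrightarrow> \<xi> i \<le> \<xi> j) \<and>
     (\<forall>i. p < i \<longrightarrow> \<xi> i = undefined)"

definition precomp :: "('o, 'a) simplex \<Rightarrow> nat \<Rightarrow> (nat \<Rightarrow> nat) \<Rightarrow> ('o, 'a) simplex" where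
  "precomp Y p \<xi> = \<lparr> dim = p,
      sob = (\<lambda>i. if i \<le> p then sob Y (\<xi> i) else undefined),
      sar = (\<lambda>i j. if i \<le> j \<and> j \<le> p then sar Y (\<xi> i) (\<xi> j) else undefined) \<rparr>"

text \<open>A morphism \<xi>_* : X -> Y is represented by the triple (X, \<xi>, Y).\<close>

type_synonym ('o, 'a) dmor = "('o, 'a) simplex \<times> (nat \<Rightarrow> nat) \<times> ('o, 'a) simplex"

definition dsrc :: "('o, 'a) dmor \<Rightarrow> ('o, 'a) simplex" where
  "dsrc f = fst f"

definition dtgt :: "('o, 'a) dmor \<Rightarrow> ('o, 'a) simplex" where
  "dtgt f = snd (snd f)"

definition dmap :: "('o, 'a) dmor \<Rightarrow> nat \<Rightarrow> nat" where
  "dmap f = fst (snd f)"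

definition is_dmor :: "('o, 'a) category \<Rightarrow> ('o, 'a) dmor \<Rightarrow> bool" where
  "is_dmor C f \<longleftrightarrow> is_simplex C (dsrc f) \<and> is_simplex C (dtgt f) \<and>
     mono_map (dim (dsrc f)) (dim (dtgt f)) (dmap f) \<and>
     precomp (dtgt f) (dim (dsrc f)) (dmap f) = dsrc f"

definition dcomp :: "('o, 'a) dmor \<Rightarrow> ('o, 'a) dmor \<Rightarrow> ('o, 'a) dmor" where
  "dcomp g f = (dsrc f, (\<lambda>i. if i \<le> dim (dsrc f) then dmap g (dmap f i) else undefined), dtgt g)"

definition did :: "('o, 'a) simplex \<Rightarrow> ('o, 'a) dmor" where
  "did X = (X, (\<lambda>i. if i \<le> dim X then i else undefined), X)"

inductive dsim :: "('o, 'a) category \<Rightarrow> ('o, 'a) dmor \<Rightarrow> ('o, 'a) dmor \<Rightarrow> bool" for C where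
  elem: "\<lbrakk> is_simplex C X;
           mono_map (Suc (dim X)) (dim X) s; s ` {..Suc (dim X)} = {..dim X};
           mono_map (dim X) (Suc (dim X)) d; \<forall>i\<le>dim X. s (d i) = i;
           mono_map (dim X) (Suc (dim X)) d'; \<forall>i\<le>dim X. s (d' i) = i \<rbrakk>
         \<Longrightarrow> dsim C (X, d, precomp X (Suc (dim X)) s) (X, d', precomp X (Suc (dim X)) s)"
| refl: "is_dmor C f \<Longrightarrow> dsim C f f"
| sym: "dsim C f g \<Longrightarrow> dsim C g f"
| trans: "dsim C f g \<Longrightarrow> dsim C g h \<Longrightarrow> dsim C f h"
| comp: "\<lbrakk> dsim C f f'; dsim C g g'; is_dmor C f; is_dmor C f'; is_dmor C g; is_dmor C g';
           dtgt f = dsrc g; dtgt f' = dsrc g' \<rbrakk> \<Longrightarrow> dsim C (dcomp g f) (dcomp g' f')"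

definition qcls :: "('o, 'a) category \<Rightarrow> ('o, 'a) dmor \<Rightarrow> ('o, 'a) dmor set" where
  "qcls C f = {g. dsim C g f}"

definition qhom :: "('o, 'a) category \<Rightarrow> ('o, 'a) simplex \<Rightarrow> ('o, 'a) simplex \<Rightarrow> ('o, 'a) dmor set set" where
  "qhom C X Y = {qcls C f | f. is_dmor C f \<and> dsrc f = X \<and> dtgt f = Y}"

definition qcomp :: "('o, 'a) category \<Rightarrow> ('o, 'a) dmor set \<Rightarrow> ('o, 'a) dmor set \<Rightarrow> ('o, 'a) dmor set" where
  "qcomp C G F = qcls C (dcomp (SOME g. g \<in> G) (SOME f. f \<in> F))"

definition qid :: "('o, 'a) category \<Rightarrow> ('o, 'a) simplex \<Rightarrow> ('o, 'a) dmor set" where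
  "qid C X = qcls C (did X)"

definition sd_hom :: "('o, 'a) category \<Rightarrow> ('o, 'a) simplex \<Rightarrow> ('o, 'a) simplex \<Rightarrow> ('o, 'a) dmor set set" where
  "sd_hom C X Y = (if nondeg C X \<and> nondeg C Y then qhom C X Y else {})"

definition sd_iso :: "('o, 'a) category \<Rightarrow> ('o, 'a) simplex \<Rightarrow> ('o, 'a) simplex \<Rightarrow> ('o, 'a) dmor set \<Rightarrow> bool" where
  "sd_iso C X Y F \<longleftrightarrow> nondeg C X \<and> nondeg C Y \<and> F \<in> sd_hom C X Y \<and>
     (\<exists>G\<in>sd_hom C Y X. qcomp C G F = qid C X \<and> qcomp C F G = qid C Y)"

end

theory Submission
  imports Defs
begin

text \<open>A morphism of \<open>\<Delta>/C\<close> out of a non-degenerate simplex cannot collapse two consecutive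
  vertices, since the arrow between them would be an identity. Hence it is injective, so an
  isomorphism of \<open>Sd(C)\<close> relates simplices of equal dimension, and a strictly increasing
  self-map of \<open>[q]\<close> is the identity. No relation \<open>\<sim>\<close> is ever needed: the inverse only
  serves to bound the dimensions.\<close>

lemma le_of_strict_steps:
  fixes \<xi> :: "nat \<Rightarrow> nat"
  assumes "\<And>j. j < p \<Longrightarrow> \<xi> j < \<xi> (Suc j)" and "i \<le> p"
  shows "i \<le> \<xi> i"
  using assms(2)
proof (induction i)
  case (Suc i)
  then show ?case using assms(1)[of i] by simp
qed simp

lemma room_of_strict_steps:
  fixes \<xi> :: "nat \<Rightarrow> nat"
  assumes "\<And>j. j < p \<Longrightarrow> \<xi> j < \<xi> (Suc j)" and "\<xi> p \<le> q" and "i \<le> p"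
  shows "\<xi> i + (p - i) \<le> q"
  using assms(3)
proof (induction i rule: inc_induct)
  case (step n)
  then show ?case using assms(1)[of n] by simp
qed (use assms(2) in simp)

lemma eq_id_of_strict_steps:
  fixes \<xi> :: "nat \<Rightarrow> nat"
  assumes "\<And>j. j < p \<Longrightarrow> \<xi> j < \<xi> (Suc j)" and "\<xi> p \<le> p" and "i \<le> p"
  shows "\<xi> i = i"
  using le_of_strict_steps[of p \<xi> i] room_of_strict_steps[of p \<xi> p i] assms by simp

lemma precomp_id:
  assumes "is_simplex C Y"
  shows "precomp Y (dim Y) (\<lambda>i. if i \<le> dim Y then i else undefined) = Y"
  using assms by (intro simplex.equality) (auto simp: precomp_def is_simplex_def intro!: ext)

lemma dmor_step_strict:
  assumes f: "is_dmor C f" and X: "nondeg C (dsrc f)" and j: "j < dim (dsrc f)"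
  shows "dmap f j < dmap f (Suc j)"
proof (rule ccontr)
  let ?X = "dsrc f" and ?Y = "dtgt f" and ?\<xi> = "dmap f"
  assume "\<not> ?\<xi> j < ?\<xi> (Suc j)"
  moreover have mm: "mono_map (dim ?X) (dim ?Y) ?\<xi>" and Y: "is_simplex C ?Y"
    using f by (auto simp: is_dmor_def)
  moreover have "?\<xi> j \<le> ?\<xi> (Suc j)" and top: "?\<xi> (Suc j) \<le> dim ?Y"
    using mm j by (auto simp: mono_map_def)
  ultimately have collapse: "?\<xi> j = ?\<xi> (Suc j)" by simp
  have "sar ?X j (Suc j) = sar (precomp ?Y (dim ?X) ?\<xi>) j (Suc j)"
    using f by (simp add: is_dmor_def)
  also have "\<dots> = sar ?Y (?\<xi> j) (?\<xi> (Suc j))"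
    using j by (simp add: precomp_def)
  also have "\<dots> = Idt C (sob ?Y (?\<xi> (Suc j)))"
    using collapse top Y by (simp add: is_simplex_def)
  finally have "sar ?X j (Suc j) = Idt C (sob ?Y (?\<xi> (Suc j)))" .
  moreover have "sob ?Y (?\<xi> (Suc j)) \<in> Obj C"
    using top Y by (simp add: is_simplex_def)
  moreover have "\<not> (\<exists>x\<in>Obj C. sar ?X (Suc j - 1) (Suc j) = Idt C x)"
    using X j unfolding nondeg_def by (metis Suc_le_eq le_add1 plus_1_eq_Suc)
  ultimately show False by auto
qed

lemma dmor_dim_le:
  assumes "is_dmor C f" and "nondeg C (dsrc f)"
  shows "dim (dsrc f) \<le> dim (dtgt f)"
proof -
  have "dim (dsrc f) \<le> dmap f (dim (dsrc f))"
    using le_of_strict_steps dmor_step_strict[OF assms] by blast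
  also have "\<dots> \<le> dim (dtgt f)"
    using assms(1) by (auto simp: is_dmor_def mono_map_def)
  finally show ?thesis .
qed

lemma dmor_equal_dim_is_did:
  assumes f: "is_dmor C f" and "nondeg C (dsrc f)" and dims: "dim (dsrc f) = dim (dtgt f)"
  shows "dsrc f = dtgt f \<and> f = did (dsrc f)"
proof -
  let ?X = "dsrc f" and ?Y = "dtgt f" and ?\<xi> = "dmap f" and ?p = "dim (dsrc f)"
  have mm: "mono_map ?p (dim ?Y) ?\<xi>" and pc: "precomp ?Y ?p ?\<xi> = ?X" and Y: "is_simplex C ?Y"
    using f by (auto simp: is_dmor_def)
  have "?\<xi> ?p \<le> ?p"
    using mm dims by (simp add: mono_map_def)
  then have "\<And>i. i \<le> ?p \<Longrightarrow> ?\<xi> i = i"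
    using eq_id_of_strict_steps[of ?p ?\<xi>] dmor_step_strict[OF assms(1,2)] by blast
  then have \<xi>: "?\<xi> = (\<lambda>i. if i \<le> ?p then i else undefined)"
    using mm by (auto simp: mono_map_def)
  have "?X = precomp ?Y ?p ?\<xi>"
    using pc by simp
  also have "\<dots> = precomp ?Y (dim ?Y) (\<lambda>i. if i \<le> dim ?Y then i else undefined)"
    using dims \<xi> by simp
  also have "\<dots> = ?Y"
    using precomp_id[OF Y] .
  finally have XY: "?X = ?Y" .
  have "f = (?X, ?\<xi>, ?Y)" by (simp add: dsrc_def dtgt_def dmap_def)
  then show ?thesis using XY \<xi> by (simp add: did_def)
qed

theorem corollary20:
  fixes C :: "('o, 'a) category"
    and X Y :: "('o, 'a) simplex"
    and F :: "('o, 'a) dmor set"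
  assumes "is_category C"
    and "sd_iso C X Y F"
  shows "X = Y \<and> F = qid C X"
proof -
  have X: "nondeg C X" and Y: "nondeg C Y" and F: "F \<in> sd_hom C X Y"
    and "sd_hom C Y X \<noteq> {}"
    using assms(2) by (auto simp: sd_iso_def)
  then obtain g where g: "is_dmor C g" "dsrc g = Y" "dtgt g = X"
    by (auto simp: sd_hom_def qhom_def)
  obtain f where f: "F = qcls C f" "is_dmor C f" "dsrc f = X" "dtgt f = Y"
    using F X Y by (auto simp: sd_hom_def qhom_def)
  have "dim X \<le> dim Y" using dmor_dim_le[of C f] f X by simp
  moreover have "dim Y \<le> dim X" using dmor_dim_le[of C g] g Y by simp
  ultimately have "X = Y \<and> f = did X"
    using dmor_equal_dim_is_did[of C f] f X by simp
  then show ?thesis using f by (simp add: qid_def)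
qed

end
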